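(* Let $\pi$ be the free group of rank two with presentation $\langle A_1,A_2,A_3\mid A_1A_2A_3=\mathbb{I}\rangle$, and let $\rho_0:\pi\to\mathsf{SO}(2,1)^0$ be a homomorphism such that each $\rho_0(A_i)$ ($i=1,2,3$) is hyperbolic or parabolic and $\rho_0(\pi)$ is not solvable. For each $i$ choose $\mathsf{v}_i\in\mathrm{Fix}(\rho_0(A_i))$ positive relative to $\rho_0(A_i)$, and define $\mu_i:H^1(\pi,V)\to\mathbb{R}$ by $\mu_i([u])=u(A_i)\cdot\mathsf{v}_i$ (the value of $(\rho(A_i)(x)-x)\cdot\mathsf{v}_i$ for the affine deformation $\rho$ with translational part $u$). Then $\mu=(\mu_1,\mu_2,\mu_3):H^1(\pi,V)\to\mathbb{R}^3$ is a well-defined linear isomorphism of vector spaces.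
   Context: $V=\mathbb{R}^3$ with the Lorentzian inner product $x\cdot y=x_1y_1+x_2y_2-x_3y_3$ and its standard orientation, regarded as a $\pi$-module via $\rho_0$; $\mathsf{SO}(2,1)^0$ is the identity component of its isometry group. $H^1(\pi,V)$ is group cohomology: cocycles $u:\pi\to V$ with $u(gh)=u(g)+\rho_0(g)u(h)$ modulo coboundaries $g\mapsto \rho_0(g)x-x$. A nonidentity $g\in\mathsf{SO}(2,1)^0$ is hyperbolic if it has three distinct real eigenvalues and parabolic if its only eigenvalue is $1$; then $\mathrm{Fix}(g)$ is a line. A vector $\mathsf{v}\in\mathrm{Fix}(g)$ is positive relative to $g$ if $(\mathsf{v},x,gx)$ is a positively oriented basis for any null ($x\cdot x=0$) or timelike ($x\cdot x<0$) vector $x$ that is not an eigenvector of $g$. An affine deformation with translational part $u$ is $\rho(g)(x)=\rho_0(g)x+u(g)$. *)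

theory Defs
  imports "HOL-Analysis.Analysis" "HOL-Algebra.Solvable_Groups" "HOL-Algebra.Generated_Groups"
begin

definition lor :: "real^3 \<Rightarrow> real^3 \<Rightarrow> real" where
  "lor x y = x$1 * y$1 + x$2 * y$2 - x$3 * y$3"

definition O21 :: "(real^3^3) set" where
  "O21 = {g. \<forall>x y. lor (g *v x) (g *v y) = lor x y}"

definition SO21_0 :: "(real^3^3) set" where
  "SO21_0 = connected_component_set O21 (mat 1)"

definition SO21grp :: "(real^3^3) monoid" where
  "SO21grp = \<lparr>carrier = SO21_0, mult = (**), one = mat 1\<rparr>"

definition real_eigenvalue :: "real^3^3 \<Rightarrow> real \<Rightarrow> bool" where
  "real_eigenvalue g l \<longleftrightarrow> (\<exists>v. v \<noteq> 0 \<and> g *v v = l *\<^sub>R v)"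

definition cmat :: "real^3^3 \<Rightarrow> complex^3^3" where
  "cmat g = (\<chi> i j. complex_of_real (g$i$j))"

definition complex_eigenvalue :: "real^3^3 \<Rightarrow> complex \<Rightarrow> bool" where
  "complex_eigenvalue g l \<longleftrightarrow> (\<exists>v::complex^3. v \<noteq> 0 \<and> cmat g *v v = l *s v)"

definition hyperbolic :: "real^3^3 \<Rightarrow> bool" where
  "hyperbolic g \<longleftrightarrow> g \<noteq> mat 1 \<and>
     (\<exists>l1 l2 l3. l1 \<noteq> l2 \<and> l1 \<noteq> l3 \<and> l2 \<noteq> l3 \<and>
        real_eigenvalue g l1 \<and> real_eigenvalue g l2 \<and> real_eigenvalue g l3)"

definition parabolic :: "real^3^3 \<Rightarrow> bool" where
  "parabolic g \<longleftrightarrow> g \<noteq> mat 1 \<and> (\<forall>l. complex_eigenvalue g l \<longleftrightarrow> l = 1)"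

definition Fix :: "real^3^3 \<Rightarrow> (real^3) set" where
  "Fix g = {x. g *v x = x}"

definition eigenvector :: "real^3^3 \<Rightarrow> real^3 \<Rightarrow> bool" where
  "eigenvector g x \<longleftrightarrow> x \<noteq> 0 \<and> (\<exists>l. g *v x = l *\<^sub>R x)"

definition pos_oriented :: "real^3 \<Rightarrow> real^3 \<Rightarrow> real^3 \<Rightarrow> bool" where
  "pos_oriented a b c \<longleftrightarrow> det (vector [a, b, c] :: real^3^3) > 0"

definition positive_rel :: "real^3^3 \<Rightarrow> real^3 \<Rightarrow> bool" where
  "positive_rel g v \<longleftrightarrow> v \<in> Fix g \<and>
     (\<forall>x. x \<noteq> 0 \<and> lor x x \<le> 0 \<and> \<not> eigenvector g x \<longrightarrow> pos_oriented v x (g *v x))"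

text \<open>Words in two letters: (letter, inverted?).\<close>
fun eval_word :: "('g, 'b) monoid_scheme \<Rightarrow> 'g \<Rightarrow> 'g \<Rightarrow> (bool \<times> bool) list \<Rightarrow> 'g" where
  "eval_word G a b [] = \<one>\<^bsub>G\<^esub>"
| "eval_word G a b ((l, i) # w) =
     (let x = (if l then b else a) in if i then inv\<^bsub>G\<^esub> x else x) \<otimes>\<^bsub>G\<^esub> eval_word G a b w"

fun reduced_word :: "(bool \<times> bool) list \<Rightarrow> bool" where
  "reduced_word [] = True"
| "reduced_word [_] = True"
| "reduced_word ((l1, i1) # (l2, i2) # w) =
     (\<not> (l1 = l2 \<and> i1 \<noteq> i2) \<and> reduced_word ((l2, i2) # w))"

definition free_on2 :: "('g, 'b) monoid_scheme \<Rightarrow> 'g \<Rightarrow> 'g \<Rightarrow> bool" where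
  "free_on2 G a b \<longleftrightarrow> group G \<and> a \<in> carrier G \<and> b \<in> carrier G \<and>
     generate G {a, b} = carrier G \<and>
     (\<forall>w. w \<noteq> [] \<and> reduced_word w \<longrightarrow> eval_word G a b w \<noteq> \<one>\<^bsub>G\<^esub>)"

definition cocycles :: "('g, 'b) monoid_scheme \<Rightarrow> ('g \<Rightarrow> real^3^3) \<Rightarrow> ('g \<Rightarrow> real^3) set" where
  "cocycles G r = {u. \<forall>g\<in>carrier G. \<forall>h\<in>carrier G. u (g \<otimes>\<^bsub>G\<^esub> h) = u g + r g *v u h}"

definition coboundaries :: "('g, 'b) monoid_scheme \<Rightarrow> ('g \<Rightarrow> real^3^3) \<Rightarrow> ('g \<Rightarrow> real^3) set" where
  "coboundaries G r = {u. \<exists>x. \<forall>g\<in>carrier G. u g = r g *v x - x}"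

end

theory Submission
  imports Defs
begin

text \<open>Since \<open>\<pi>\<close> is free on \<open>A\<^sub>1, A\<^sub>2\<close>, a cocycle is determined by the pair
  \<open>(u(A\<^sub>1), u(A\<^sub>2)) \<in> V \<times> V\<close>, and every pair occurs, because cocycles are the translational
  parts of homomorphisms into the affine group. Via the relation \<open>A\<^sub>1A\<^sub>2A\<^sub>3 = 1\<close>, \<open>\<mu>\<close> becomes a
  linear map \<open>V \<times> V \<rightarrow> \<real>\<^sup>3\<close> vanishing on the coboundaries, which are the image of
  \<open>x \<mapsto> (\<rho>\<^sub>0(A\<^sub>1)x - x, \<rho>\<^sub>0(A\<^sub>2)x - x)\<close>. This map is injective: a common fixed vector of
  \<open>\<rho>\<^sub>0(A\<^sub>1)\<close> and \<open>\<rho>\<^sub>0(A\<^sub>2)\<close> would put \<open>\<rho>\<^sub>0(\<pi>)\<close> inside its stabilizer, which is abelian.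
  The map induced by \<open>\<mu>\<close> is onto because the three functionals are independent: the \<open>v\<^sub>i\<close> are
  nonzero, and \<open>v\<^sub>1, v\<^sub>2, v\<^sub>3\<close> cannot all be parallel without being a common fixed vector.
  Counting dimensions, \<open>6 = 3 + 3\<close>, the kernel of \<open>\<mu>\<close> is exactly the coboundaries.\<close>

section \<open>Lorentzian geometry\<close>

lemma lor_add_left: "lor (x + y) z = lor x z + lor y z"
  and lor_diff_left: "lor (x - y) z = lor x z - lor y z"
  and lor_minus_left: "lor (- x) y = - lor x y"
  and lor_scaleR_left: "lor (c *\<^sub>R x) y = c * lor x y"
  and lor_scaleR_right: "lor x (c *\<^sub>R y) = c * lor x y"
  and lor_zero_left [simp]: "lor 0 y = 0"
  and lor_commute: "lor x y = lor y x"
  by (simp_all add: lor_def algebra_simps)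

definition lorentz_matrix :: "real^3^3" where
  "lorentz_matrix = (\<chi> i j. if i = j then (if i = 3 then -1 else 1) else 0)"

lemma lor_eq_inner: "lor x y = x \<bullet> (lorentz_matrix *v y)"
  by (simp add: lor_def lorentz_matrix_def inner_vec_def sum_3 matrix_vector_mult_def)

lemma lor_nondegenerate: assumes "\<And>z. lor d z = 0" shows "d = 0"
proof -
  have "lor d (lorentz_matrix *v d) = 0" by (rule assms)
  then have "d$1 * d$1 + d$2 * d$2 + d$3 * d$3 = 0"
    by (simp add: lor_def lorentz_matrix_def matrix_vector_mult_def sum_3)
  then have "d$1 = 0 \<and> d$2 = 0 \<and> d$3 = 0"
    by (smt (verit) zero_le_square mult_eq_0_iff)
  then show ?thesis by (simp add: vec_eq_iff forall_3)
qed

lemma lor_eq_one_exists: assumes "v \<noteq> 0" obtains p where "lor p v = 1"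
proof -
  obtain z where z: "lor z v \<noteq> 0" using lor_nondegenerate assms lor_commute by metis
  have "lor ((1 / lor z v) *\<^sub>R z) v = 1" using z by (simp add: lor_scaleR_left)
  then show thesis by (rule that)
qed

lemma O21_lor: "g \<in> O21 \<Longrightarrow> lor (g *v x) (g *v y) = lor x y"
  by (simp add: O21_def)

lemma mat_1_O21: "mat 1 \<in> O21"
  by (simp add: O21_def)

lemma O21_fixed_orthogonal_displacement:
  assumes "g \<in> O21" "g *v v = v" shows "lor (g *v x - x) v = 0"
  using O21_lor[OF assms(1), of x v] assms(2) by (simp add: lor_diff_left)

lemma O21_matrix_identity:
  assumes "g \<in> O21" shows "transpose g ** lorentz_matrix ** g = lorentz_matrix"
proof -
  have "x \<bullet> ((transpose g ** lorentz_matrix ** g) *v y) = x \<bullet> (lorentz_matrix *v y)" for x y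
  proof -
    have "x \<bullet> ((transpose g ** lorentz_matrix ** g) *v y)
        = x \<bullet> (transpose g *v (lorentz_matrix *v (g *v y)))"
      by (simp add: matrix_vector_mul_assoc matrix_mul_assoc)
    also have "\<dots> = (g *v x) \<bullet> (lorentz_matrix *v (g *v y))"
      by (metis dot_lmul_matrix vector_transpose_matrix transpose_matrix_vector)
    also have "\<dots> = x \<bullet> (lorentz_matrix *v y)" using assms by (simp add: O21_lor flip: lor_eq_inner)
    finally show ?thesis .
  qed
  then have "(transpose g ** lorentz_matrix ** g) *v y = lorentz_matrix *v y" for y
    using vector_eq_ldot by blast
  then show ?thesis by (simp add: matrix_eq)
qed

lemma det_lorentz_matrix: "det lorentz_matrix = -1"
  by (simp add: det_3 lorentz_matrix_def)

lemma O21_det_square: "g \<in> O21 \<Longrightarrow> det g * det g = 1"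
  using arg_cong[OF O21_matrix_identity, of g det]
  by (simp add: det_mul det_transpose det_lorentz_matrix)

lemma O21_invertible: "g \<in> O21 \<Longrightarrow> invertible g"
  using O21_det_square invertible_det_nz by force

lemma SO21_0_subset_O21: "SO21_0 \<subseteq> O21"
  by (simp add: SO21_0_def connected_component_subset)

lemma continuous_on_det: "continuous_on S (det :: real^'n^'n \<Rightarrow> real)"
  unfolding det_def by (intro continuous_intros)

text \<open>\<open>det\<close> is continuous with values \<open>\<plusminus>1\<close> on \<open>O(2,1)\<close>, so it is constant on a connected
  component.\<close>
lemma SO21_0_det: assumes "g \<in> SO21_0" shows "det g = 1"
proof (rule ccontr)
  let ?S = "connected_component_set O21 (mat 1)"
  assume "det g \<noteq> 1"
  with O21_det_square have "det g = -1"
    using SO21_0_subset_O21 assms by (smt (verit) mult_cancel_left1 square_eq_1_iff subsetD)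
  have "mat 1 \<in> ?S" using mat_1_O21 by simp
  then have "1 \<in> det ` ?S" by (metis det_I image_eqI)
  moreover have "-1 \<in> det ` ?S" using assms \<open>det g = -1\<close> by (force simp: SO21_0_def)
  moreover have "connected (det ` ?S)"
    by (rule connected_continuous_image[OF continuous_on_det connected_connected_component])
  ultimately have "{-1..1} \<subseteq> det ` ?S" using connected_contains_Icc by blast
  then have "0 \<in> det ` ?S" by auto
  then obtain h where "h \<in> ?S" "det h = 0" by (metis imageE)
  then have "h \<in> O21" "det h = 0" using connected_component_subset by auto
  with O21_det_square show False by fastforce
qed

section \<open>Stabilizers in \<open>SO(2,1)\<close>\<close>

definition lorentz_cross :: "real^3 \<Rightarrow> real^3 \<Rightarrow> real^3" where
  "lorentz_cross a b = lorentz_matrix *v cross3 a b"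

lemma lor_lorentz_cross: "lor (lorentz_cross a b) z = cross3 a b \<bullet> z"
  by (simp add: lorentz_cross_def lor_def lorentz_matrix_def matrix_vector_mult_def sum_3 inner_vec_def)

lemma lorentz_cross_components:
  "lorentz_cross w v = vector [w$2 * v$3 - w$3 * v$2, w$3 * v$1 - w$1 * v$3, w$2 * v$1 - w$1 * v$2]"
  by (simp add: lorentz_cross_def lorentz_matrix_def matrix_vector_mult_def sum_3 cross3_def
      vec_eq_iff forall_3)

lemma linear_lorentz_cross: "linear (lorentz_cross w)"
  by (rule linearI) (simp_all add: lorentz_cross_components vec_eq_iff forall_3 algebra_simps)

lemma surj_matrix_det_nonzero:
  fixes g :: "real^'n^'n" assumes "det g \<noteq> 0" obtains z where "g *v z = y"
proof -
  obtain h where "g ** h = mat 1" using assms invertible_det_nz invertible_def by blast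
  then have "g *v (h *v y) = y" by (simp add: matrix_vector_mul_assoc)
  then show thesis by (rule that)
qed

lemma lorentz_cross_equivariant:
  assumes "g \<in> O21" "det g = 1"
  shows "g *v lorentz_cross a b = lorentz_cross (g *v a) (g *v b)"
proof (rule lor_nondegenerate[where d = "_ - _", simplified])
  fix z'
  have "det g \<noteq> 0" using assms(2) by simp
  then obtain z where z: "g *v z = z'" by (rule surj_matrix_det_nonzero)
  have "lor (lorentz_cross (g *v a) (g *v b)) (g *v z) = (transpose g *v cross3 (g *v a) (g *v b)) \<bullet> z"
    by (metis lor_lorentz_cross dot_lmul_matrix transpose_matrix_vector inner_commute)
  also have "\<dots> = lor (g *v lorentz_cross a b) (g *v z)"
    using cross_matrix_mult[of g a b] assms by (simp add: lor_lorentz_cross O21_lor)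
  finally show "lor (g *v lorentz_cross a b - lorentz_cross (g *v a) (g *v b)) z' = 0"
    using z by (simp add: lor_diff_left)
qed

lemma det_lorentz_cross_orbit:
  assumes "lor x x = 0"
  shows "det (vector [x, lorentz_cross w x, lorentz_cross w (lorentz_cross w x)] :: real^3^3)
    = - (lor w x * lor w x * lor w x)"
  using assms by (simp add: lorentz_cross_components det_3 lor_def) algebra

lemma lorentz_cross_cyclic_vector:
  assumes "w \<noteq> 0"
  obtains x where "det (vector [x, lorentz_cross w x, lorentz_cross w (lorentz_cross w x)] :: real^3^3) \<noteq> 0"
proof -
  have "\<exists>x \<in> {vector [1,0,1], vector [-1,0,1], vector [0,1,1]}. lor w x \<noteq> 0"
  proof (rule ccontr)
    assume "\<not> ?thesis"
    then have "w$1 = 0" "w$2 = 0" "w$3 = 0" by (auto simp: lor_def)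
    with assms show False by (simp add: vec_eq_iff forall_3)
  qed
  then obtain x where x: "x \<in> {vector [1,0,1], vector [-1,0,1], vector [0,1,1]}" "lor w x \<noteq> 0"
    by blast
  then have "lor x x = 0" by (auto simp: lor_def)
  then show thesis using that[of x] x(2) by (simp add: det_lorentz_cross_orbit)
qed

lemma span_det_nonzero:
  assumes "det (vector [p, q, r] :: real^3^3) \<noteq> 0"
  obtains a b c where "v = a *\<^sub>R p + b *\<^sub>R q + c *\<^sub>R r"
proof -
  let ?M = "transpose (vector [p, q, r] :: real^3^3)"
  obtain y where "?M *v y = v" using surj_matrix_det_nonzero assms by (metis det_transpose)
  moreover have "?M *v y = y$1 *\<^sub>R p + y$2 *\<^sub>R q + y$3 *\<^sub>R r"
    by (simp add: vec_eq_iff matrix_vector_mult_def sum_3 transpose_def algebra_simps)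
  ultimately show thesis using that by metis
qed

text \<open>The determinant condition says that \<open>x\<close> is a cyclic vector of \<open>C\<close>.\<close>
lemma commuting_with_cyclic_operator:
  fixes f C :: "real^3 \<Rightarrow> real^3"
  assumes "linear f" "linear C" "\<And>v. f (C v) = C (f v)"
    and cyclic: "det (vector [x, C x, C (C x)] :: real^3^3) \<noteq> 0"
  obtains \<alpha> \<beta> \<gamma> where "\<And>v. f v = \<alpha> *\<^sub>R v + \<beta> *\<^sub>R C v + \<gamma> *\<^sub>R C (C v)"
proof -
  obtain \<alpha> \<beta> \<gamma> where fx: "f x = \<alpha> *\<^sub>R x + \<beta> *\<^sub>R C x + \<gamma> *\<^sub>R C (C x)"
    using span_det_nonzero[OF cyclic] by blast
  define P where "P v = \<alpha> *\<^sub>R v + \<beta> *\<^sub>R C v + \<gamma> *\<^sub>R C (C v)" for v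
  have P_C: "P (C v) = C (P v)" for v
    using assms(2) by (simp add: P_def linear_add linear_scale)
  have on_cycle: "f x = P x" "f (C x) = P (C x)" "f (C (C x)) = P (C (C x))"
    using fx assms(3) P_C by (simp_all add: P_def)
  have "f v = P v" for v
  proof -
    obtain a b c where "v = a *\<^sub>R x + b *\<^sub>R C x + c *\<^sub>R C (C x)"
      using span_det_nonzero[OF cyclic] by blast
    then show ?thesis
      using on_cycle assms(1,2) by (simp add: P_def linear_add linear_scale algebra_simps)
  qed
  then show thesis by (intro that) (simp add: P_def)
qed

text \<open>Stabilizer elements commute with the Lorentzian cross product by \<open>w\<close>, which has a cyclic
  vector; hence they are polynomials in it.\<close>
lemma stabilizer_commute:
  assumes "w \<noteq> 0"
    and "g \<in> O21" "det g = 1" "g *v w = w" and "h \<in> O21" "det h = 1" "h *v w = w"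
  shows "g ** h = h ** g"
proof -
  let ?C = "lorentz_cross w"
  obtain x where cyclic: "det (vector [x, ?C x, ?C (?C x)] :: real^3^3) \<noteq> 0"
    using lorentz_cross_cyclic_vector[OF assms(1)] by blast
  have polynomial: "\<exists>\<alpha> \<beta> \<gamma>. \<forall>v. k *v v = \<alpha> *\<^sub>R v + \<beta> *\<^sub>R ?C v + \<gamma> *\<^sub>R ?C (?C v)"
    if "k \<in> O21" "det k = 1" "k *v w = w" for k
    using commuting_with_cyclic_operator[OF matrix_vector_mul_linear linear_lorentz_cross _ cyclic]
      lorentz_cross_equivariant[OF that(1,2)] that(3) by metis
  obtain a b c where "\<forall>v. g *v v = a *\<^sub>R v + b *\<^sub>R ?C v + c *\<^sub>R ?C (?C v)"
    using polynomial assms(2-4) by blast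
  moreover obtain a' b' c' where "\<forall>v. h *v v = a' *\<^sub>R v + b' *\<^sub>R ?C v + c' *\<^sub>R ?C (?C v)"
    using polynomial assms(5-7) by blast
  ultimately have "g *v (h *v v) = h *v (g *v v)" for v
    using linear_lorentz_cross[of w] by (simp add: linear_add linear_scale algebra_simps)
  then show ?thesis by (simp add: matrix_eq matrix_vector_mul_assoc)
qed

lemma mat_vector_mult: "(mat l :: real^'n^'n) *v x = l *\<^sub>R x"
  by (metis matrix_scaleR matrix_vector_mul(2) linear_scaleR)

text \<open>Five causal vectors in general position suffice.\<close>
lemma scalar_if_causal_eigenvectors:
  fixes g :: "real^3^3"
  assumes "\<And>x. x \<noteq> 0 \<Longrightarrow> lor x x \<le> 0 \<Longrightarrow> eigenvector g x"
  obtains l where "g = mat l"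
proof -
  have "\<exists>l. g *v x = l *\<^sub>R x"
    if "x \<in> {vector [0,0,1], vector [1,0,1], vector [1,0,2], vector [0,1,1], vector [0,1,2]}" for x
    using assms[of x] that by (auto simp: eigenvector_def vec_eq_iff forall_3 lor_def)
  then obtain l m1 n1 m2 n2 where
    "g *v vector [0,0,1] = l *\<^sub>R vector [0,0,1]" "g *v vector [1,0,1] = m1 *\<^sub>R vector [1,0,1]"
    "g *v vector [1,0,2] = n1 *\<^sub>R vector [1,0,2]" "g *v vector [0,1,1] = m2 *\<^sub>R vector [0,1,1]"
    "g *v vector [0,1,2] = n2 *\<^sub>R vector [0,1,2]"
    by (metis insertCI)
  then have "g$1$3 = 0" "g$2$3 = 0" "g$3$3 = l"
     "g$1$1 + g$1$3 = m1" "g$2$1 + g$2$3 = 0" "g$3$1 + g$3$3 = m1"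
     "g$1$1 + 2 * g$1$3 = n1" "g$2$1 + 2 * g$2$3 = 0" "g$3$1 + 2 * g$3$3 = 2 * n1"
     "g$1$2 + g$1$3 = 0" "g$2$2 + g$2$3 = m2" "g$3$2 + g$3$3 = m2"
     "g$1$2 + 2 * g$1$3 = 0" "g$2$2 + 2 * g$2$3 = n2" "g$3$2 + 2 * g$3$3 = 2 * n2"
    by (simp_all add: matrix_vector_mult_def sum_3 vec_eq_iff forall_3)
  then have "g = mat l"
    by (simp add: vec_eq_iff forall_3 mat_def)
  then show thesis by (rule that)
qed

lemma scalar_not_hyperbolic_or_parabolic:
  "\<not> (hyperbolic (mat l :: real^3^3) \<or> parabolic (mat l :: real^3^3))"
proof
  let ?g = "mat l :: real^3^3"
  have "k = l" if "real_eigenvalue ?g k" for k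
    using that by (auto simp: real_eigenvalue_def mat_vector_mult)
  moreover have "complex_eigenvalue ?g (complex_of_real l)"
    unfolding complex_eigenvalue_def
    by (rule exI[of _ "vector [1, 0, 0]"])
      (simp add: cmat_def matrix_vector_mult_def sum_3 vec_eq_iff forall_3 mat_def)
  moreover assume "hyperbolic ?g \<or> parabolic ?g"
  ultimately show False by (auto simp: hyperbolic_def parabolic_def)
qed

text \<open>Positivity enters the theorem only through this lemma: if \<open>v = 0\<close>, then no triple
  \<open>(v, x, g x)\<close> is positively oriented, so every causal vector would be an eigenvector of \<open>g\<close>.\<close>
lemma positive_rel_nonzero:
  assumes "hyperbolic g \<or> parabolic g" "positive_rel g v"
  shows "v \<noteq> 0"
proof
  assume "v = 0"
  then have "\<not> pos_oriented v x y" for x y by (simp add: pos_oriented_def det_3)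
  then have "eigenvector g x" if "x \<noteq> 0" "lor x x \<le> 0" for x
    using assms(2) that by (auto simp: positive_rel_def)
  then obtain l where "g = mat l" by (rule scalar_if_causal_eigenvectors)
  with assms(1) scalar_not_hyperbolic_or_parabolic show False by blast
qed

section \<open>The linear algebra of the invariants\<close>

text \<open>With a linear right inverse \<open>R\<close> of \<open>F\<close>, the map \<open>(x, c) \<mapsto> L x + R c\<close> is injective,
  hence onto.\<close>
lemma linear_kernel_in_range:
  fixes F :: "'a::euclidean_space \<times> 'a \<Rightarrow> 'a" and L :: "'a \<Rightarrow> 'a \<times> 'a"
  assumes F: "linear F" "surj F" and L: "linear L" "inj L" and "\<And>x. F (L x) = 0"
    and "F p = 0"
  shows "p \<in> range L"
proof -
  obtain R where R: "linear R" "F \<circ> R = id" using linear_surjective_right_inverse F by blast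
  define K where "K q = L (fst q) + R (snd q)" for q
  have F_K: "F (K q) = snd q" for q
    using R assms(5) F(1) by (simp add: K_def linear_add pointfree_idE)
  have "linear K" unfolding K_def
    using L(1) R(1) by (intro linear_compose_add linear_compose[OF linear_fst, unfolded o_def]
        linear_compose[OF linear_snd, unfolded o_def])
  moreover have "inj K"
  proof (subst linear_injective_0[OF \<open>linear K\<close>], intro allI impI)
    fix q assume "K q = 0"
    then have "snd q = 0" using F_K F(1) linear_0 by metis
    with \<open>K q = 0\<close> have "L (fst q) = 0" using R(1) by (simp add: K_def linear_0)
    then have "fst q = 0" using L linear_injective_0 by blast
    with \<open>snd q = 0\<close> show "q = 0" by (simp add: prod_eq_iff)
  qed
  ultimately obtain q where "p = K q" using linear_inj_imp_surj by (metis surjD)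
  moreover have "snd q = 0" using F_K \<open>F p = 0\<close> \<open>p = K q\<close> by simp
  ultimately show ?thesis using R(1) by (simp add: K_def linear_0)
qed

lemma lor_orthogonal_imp_parallel:
  assumes "p \<noteq> 0" "\<And>a. lor a p = 0 \<Longrightarrow> lor a q = 0"
  obtains k where "q = k *\<^sub>R p"
proof -
  have "lor (vector [p$2, -p$1, 0]) q = 0" "lor (vector [p$3, 0, p$1]) q = 0"
    "lor (vector [0, p$3, p$2]) q = 0"
    by (rule assms(2); simp add: lor_def)+
  then have e: "p$2 * q$1 = p$1 * q$2" "p$3 * q$1 = p$1 * q$3" "p$3 * q$2 = p$2 * q$3"
    by (simp_all add: lor_def)
  consider "p$1 \<noteq> 0" | "p$2 \<noteq> 0" | "p$3 \<noteq> 0" using assms(1) by (auto simp: vec_eq_iff forall_3)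
  then show thesis
  proof cases
    case 1
    with e have "q = (q$1 / p$1) *\<^sub>R p" by (simp add: vec_eq_iff forall_3 field_simps)
    then show thesis by (rule that)
  next
    case 2
    with e have "q = (q$2 / p$2) *\<^sub>R p" by (simp add: vec_eq_iff forall_3 field_simps)
    then show thesis by (rule that)
  next
    case 3
    with e have "q = (q$3 / p$3) *\<^sub>R p" by (simp add: vec_eq_iff forall_3 field_simps)
    then show thesis by (rule that)
  qed
qed

text \<open>For a cocycle \<open>u\<close>, \<open>margulis_map \<rho>\<^sub>0(A\<^sub>1) v\<^sub>1 v\<^sub>2 v\<^sub>3 (u A\<^sub>1, u A\<^sub>2)\<close> is \<open>\<mu>(u)\<close> with the sign of
  the third coordinate reversed (see \<open>cocycle_third_invariant\<close>).\<close>
definition margulis_map :: "real^3^3 \<Rightarrow> real^3 \<Rightarrow> real^3 \<Rightarrow> real^3 \<Rightarrow> (real^3) \<times> (real^3) \<Rightarrow> real^3" where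
  "margulis_map g1 v1 v2 v3 p =
     vector [lor (fst p) v1, lor (snd p) v2, lor (fst p + g1 *v snd p) v3]"

lemma linear_margulis_map: "linear (margulis_map g1 v1 v2 v3)"
  by (rule linearI) (simp_all add: margulis_map_def vec_eq_iff forall_3 lor_add_left
      lor_scaleR_left matrix_vector_right_distrib matrix_vector_mult_scaleR algebra_simps)

lemma margulis_map_coboundary:
  assumes "g1 \<in> O21" "g2 \<in> O21" "g1 *v v1 = v1" "g2 *v v2 = v2" "(g1 ** g2) *v v3 = v3"
  shows "margulis_map g1 v1 v2 v3 (g1 *v x - x, g2 *v x - x) = 0"
proof -
  have composite: "g1 *v x - x + g1 *v (g2 *v x - x) = (g1 ** g2) *v x - x"
    by (simp add: matrix_vector_mult_diff_distrib matrix_vector_mul_assoc)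
  have "g1 ** g2 \<in> O21" using assms(1,2) by (simp add: O21_def matrix_vector_mul_assoc[symmetric])
  then have "lor (g1 *v x - x + g1 *v (g2 *v x - x)) v3 = 0"
    unfolding composite using assms(5) by (rule O21_fixed_orthogonal_displacement)
  then show ?thesis
    using O21_fixed_orthogonal_displacement[OF assms(1,3)] O21_fixed_orthogonal_displacement[OF assms(2,4)]
    by (simp add: margulis_map_def vec_eq_iff forall_3)
qed

context
  fixes g1 g2 :: "real^3^3" and v1 v2 v3 :: "real^3"
  assumes O21: "g1 \<in> O21" "g2 \<in> O21"
    and nonzero: "v1 \<noteq> 0" "v2 \<noteq> 0" "v3 \<noteq> 0"
    and fixed: "g1 *v v1 = v1" "g2 *v v2 = v2" "(g1 ** g2) *v v3 = v3"
    and no_common_fixed: "\<And>w. g1 *v w = w \<Longrightarrow> g2 *v w = w \<Longrightarrow> w = 0"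
begin

text \<open>The third coordinate functional is independent of the first two: otherwise \<open>v\<^sub>3\<close> is
  parallel to \<open>v\<^sub>1\<close> and \<open>v\<^sub>2\<close>, which would then be a common fixed vector.\<close>
lemma margulis_map_third_unit:
  obtains p where "margulis_map g1 v1 v2 v3 p = vector [0, 0, 1]"
proof (cases "\<exists>a. lor a v1 = 0 \<and> lor a v3 \<noteq> 0")
  case True
  then obtain a where "lor a v1 = 0" "lor a v3 \<noteq> 0" by blast
  then have "margulis_map g1 v1 v2 v3 ((1 / lor a v3) *\<^sub>R a, 0) = vector [0, 0, 1]"
    by (simp add: margulis_map_def lor_scaleR_left)
  then show thesis by (rule that)
next
  case False
  then obtain k where k: "v3 = k *\<^sub>R v1" using lor_orthogonal_imp_parallel[OF nonzero(1)] by metis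
  show thesis
  proof (cases "\<exists>b. lor b v2 = 0 \<and> lor b v1 \<noteq> 0")
    case True
    then obtain b where b: "lor b v2 = 0" "lor b v1 \<noteq> 0" by blast
    have "lor (g1 *v b) v3 = k * lor b v1"
      using k fixed(1) O21_lor[OF O21(1), of b v1] by (metis lor_scaleR_right)
    moreover have "k \<noteq> 0" using k nonzero(3) by auto
    ultimately have "margulis_map g1 v1 v2 v3 (0, (1 / (k * lor b v1)) *\<^sub>R b) = vector [0, 0, 1]"
      using b by (simp add: margulis_map_def lor_scaleR_left matrix_vector_mult_scaleR)
    then show thesis by (rule that)
  next
    case False
    then obtain m where "v1 = m *\<^sub>R v2" using lor_orthogonal_imp_parallel[OF nonzero(2)] by metis
    then have "g2 *v v1 = v1" using fixed(2) by (simp add: matrix_vector_mult_scaleR)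
    then show thesis using no_common_fixed fixed(1) nonzero(1) by blast
  qed
qed

lemma surj_margulis_map: "surj (margulis_map g1 v1 v2 v3)"
proof -
  let ?F = "margulis_map g1 v1 v2 v3"
  obtain p1 where p1: "lor p1 v1 = 1" using lor_eq_one_exists[OF nonzero(1)] .
  obtain q2 where q2: "lor q2 v2 = 1" using lor_eq_one_exists[OF nonzero(2)] .
  obtain p3 where p3: "?F p3 = vector [0, 0, 1]" by (rule margulis_map_third_unit)
  have p1_q2: "?F (p1, 0) = vector [1, 0, lor p1 v3]" "?F (0, q2) = vector [0, 1, lor (g1 *v q2) v3]"
    using p1 q2 by (simp_all add: margulis_map_def)
  have "?F (c$1 *\<^sub>R (p1, 0) + c$2 *\<^sub>R (0, q2)
      + (c$3 - c$1 * lor p1 v3 - c$2 * lor (g1 *v q2) v3) *\<^sub>R p3)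
      = c$1 *\<^sub>R ?F (p1, 0) + c$2 *\<^sub>R ?F (0, q2)
      + (c$3 - c$1 * lor p1 v3 - c$2 * lor (g1 *v q2) v3) *\<^sub>R ?F p3" for c
    using linear_margulis_map by (simp only: linear_add linear_scale)
  also have "\<dots> c = c" for c by (simp add: p1_q2 p3 vec_eq_iff forall_3 algebra_simps)
  finally show ?thesis by (rule surjI)
qed

lemma margulis_map_kernel:
  assumes "margulis_map g1 v1 v2 v3 (a, b) = 0"
  obtains x where "a = g1 *v x - x" "b = g2 *v x - x"
proof -
  define L where "L x = (g1 *v x - x, g2 *v x - x)" for x
  have "linear L" unfolding L_def
    by (rule linearI) (simp_all add: matrix_vector_right_distrib matrix_vector_mult_scaleR algebra_simps)
  moreover have "inj L"
    using no_common_fixed \<open>linear L\<close> by (auto simp: linear_injective_0 L_def prod_eq_iff)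
  moreover have "margulis_map g1 v1 v2 v3 (L x) = 0" for x
    unfolding L_def by (rule margulis_map_coboundary[OF O21 fixed])
  ultimately have "(a, b) \<in> range L"
    by (rule linear_kernel_in_range[OF linear_margulis_map surj_margulis_map _ _ _ assms])
  then show thesis using that by (auto simp: L_def)
qed

end

section \<open>Free groups of rank two\<close>

definition letter :: "('g, 'b) monoid_scheme \<Rightarrow> 'g \<Rightarrow> 'g \<Rightarrow> bool \<times> bool \<Rightarrow> 'g" where
  "letter G a b x = (let y = (if fst x then b else a) in if snd x then inv\<^bsub>G\<^esub> y else y)"

lemma eval_word_Cons: "eval_word G a b (x # w) = letter G a b x \<otimes>\<^bsub>G\<^esub> eval_word G a b w"
  by (cases x) (simp add: letter_def)

declare eval_word.simps(2) [simp del]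

fun reduce_Cons :: "bool \<times> bool \<Rightarrow> (bool \<times> bool) list \<Rightarrow> (bool \<times> bool) list" where
  "reduce_Cons x [] = [x]"
| "reduce_Cons x (y # w) = (if fst x = fst y \<and> snd x \<noteq> snd y then w else x # y # w)"

fun reduce_word :: "(bool \<times> bool) list \<Rightarrow> (bool \<times> bool) list" where
  "reduce_word [] = []"
| "reduce_word (x # w) = reduce_Cons x (reduce_word w)"

definition inverse_word :: "(bool \<times> bool) list \<Rightarrow> (bool \<times> bool) list" where
  "inverse_word w = rev (map (\<lambda>(l, i). (l, \<not> i)) w)"

lemma reduced_word_Cons_tl: "reduced_word (y # w) \<Longrightarrow> reduced_word w"
  by (cases w) (auto, cases y, auto)

lemma reduced_word_reduce_Cons: "reduced_word w \<Longrightarrow> reduced_word (reduce_Cons x w)"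
  by (induction x w rule: reduce_Cons.induct) (auto dest: reduced_word_Cons_tl)

lemma reduced_word_reduce_word: "reduced_word (reduce_word w)"
  by (induction w) (auto intro: reduced_word_reduce_Cons)

context group
begin

lemma letter_closed: "a \<in> carrier G \<Longrightarrow> b \<in> carrier G \<Longrightarrow> letter G a b x \<in> carrier G"
  by (auto simp: letter_def Let_def)

lemma eval_word_closed: "a \<in> carrier G \<Longrightarrow> b \<in> carrier G \<Longrightarrow> eval_word G a b w \<in> carrier G"
  by (induction w) (auto simp: eval_word_Cons letter_closed)

context
  fixes a b assumes a: "a \<in> carrier G" and b: "b \<in> carrier G"
begin

lemma eval_word_reduce_Cons: "eval_word G a b (reduce_Cons x w) = eval_word G a b (x # w)"
proof (induction x w rule: reduce_Cons.induct)
  case (2 x y w)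
  show ?case
  proof (cases "fst x = fst y \<and> snd x \<noteq> snd y")
    case True
    then have "letter G a b x \<otimes> letter G a b y = \<one>"
      using a b by (cases x; cases y) (auto simp: letter_def)
    then show ?thesis using True a b
      by (simp add: eval_word_Cons letter_closed eval_word_closed flip: m_assoc)
  next
    case False
    then show ?thesis by auto
  qed
qed (simp add: eval_word_Cons)

lemma eval_word_reduce_word: "eval_word G a b (reduce_word w) = eval_word G a b w"
  by (induction w) (simp_all add: eval_word_reduce_Cons eval_word_Cons)

lemma eval_word_append: "eval_word G a b (v @ w) = eval_word G a b v \<otimes> eval_word G a b w"
  by (induction v) (simp_all add: eval_word_Cons m_assoc a b letter_closed eval_word_closed)

lemma eval_word_inverse_word: "eval_word G a b (inverse_word w) = inv (eval_word G a b w)"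
proof (induction w)
  case (Cons x w)
  have "letter G a b (fst x, \<not> snd x) = inv (letter G a b x)"
    using a b by (cases x) (auto simp: letter_def)
  then show ?case using Cons a b
    by (simp add: inverse_word_def eval_word_append[unfolded inverse_word_def] split_def
        eval_word_Cons inv_mult_group letter_closed eval_word_closed)
qed (simp add: inverse_word_def)

lemma generate_eval_word: "g \<in> generate G {a, b} \<Longrightarrow> \<exists>w. g = eval_word G a b w"
proof (induction rule: generate.induct)
  case one
  show ?case by (metis eval_word.simps(1))
next
  case (incl h)
  then have "h = eval_word G a b [(h = b \<and> h \<noteq> a, False)]"
    using a b by (auto simp: eval_word_Cons letter_def)
  then show ?case by blast
next
  case (inv h)
  then have "inv h = eval_word G a b [(h = b \<and> h \<noteq> a, True)]"
    using a b by (auto simp: eval_word_Cons letter_def)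
  then show ?case by blast
next
  case (eng h1 h2)
  then show ?case by (metis eval_word_append)
qed

end

end

lemma free_on2_eval_word:
  assumes "free_on2 G a b" "g \<in> carrier G" obtains w where "g = eval_word G a b w"
  using assms group.generate_eval_word[of G a b g] by (auto simp: free_on2_def)

lemma free_on2_reduce_word:
  assumes "free_on2 G a b" "eval_word G a b w = \<one>\<^bsub>G\<^esub>" shows "reduce_word w = []"
  using assms group.eval_word_reduce_word[of G a b w] reduced_word_reduce_word[of w]
  by (auto simp: free_on2_def)

text \<open>It is well defined on words because a word
  representing \<open>\<one>\<close> reduces to the empty word, so it also represents \<open>\<one>\<close> in the target.\<close>
lemma free_on2_hom_exists:
  assumes free: "free_on2 G a b" and "group H" "x \<in> carrier H" "y \<in> carrier H"
  obtains \<phi> where "\<phi> \<in> hom G H" "\<phi> a = x" "\<phi> b = y"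
proof -
  interpret G: group G using free by (simp add: free_on2_def)
  interpret H: group H by fact
  have a: "a \<in> carrier G" and b: "b \<in> carrier G" using free by (auto simp: free_on2_def)
  have well_defined: "eval_word H x y v = eval_word H x y w"
    if "eval_word G a b v = eval_word G a b w" for v w
  proof -
    have "eval_word G a b (v @ inverse_word w) = \<one>\<^bsub>G\<^esub>"
      using that a b by (simp add: G.eval_word_append G.eval_word_inverse_word G.eval_word_closed)
    then have "reduce_word (v @ inverse_word w) = []" by (rule free_on2_reduce_word[OF free])
    then have "eval_word H x y (v @ inverse_word w) = \<one>\<^bsub>H\<^esub>"
      by (metis H.eval_word_reduce_word assms(3,4) eval_word.simps(1))
    then have "inv\<^bsub>H\<^esub> (inv\<^bsub>H\<^esub> eval_word H x y w) = eval_word H x y v"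
      using assms(3,4) by (intro H.inv_equality)
        (simp_all add: H.eval_word_append H.eval_word_inverse_word H.eval_word_closed)
    then show ?thesis using assms(3,4) by (simp add: H.eval_word_closed)
  qed
  define \<phi> where "\<phi> g = eval_word H x y (SOME w. g = eval_word G a b w)" for g
  have \<phi>_eval: "\<phi> (eval_word G a b w) = eval_word H x y w" for w
    unfolding \<phi>_def by (metis (mono_tags) someI well_defined)
  have "\<phi> \<in> hom G H"
  proof (rule homI)
    fix g h assume "g \<in> carrier G" "h \<in> carrier G"
    then obtain v w where "g = eval_word G a b v" "h = eval_word G a b w"
      using free_on2_eval_word[OF free] by metis
    then show "\<phi> g \<in> carrier H" "\<phi> (g \<otimes>\<^bsub>G\<^esub> h) = \<phi> g \<otimes>\<^bsub>H\<^esub> \<phi> h"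
      using a b assms(3,4)
      by (simp_all add: \<phi>_eval H.eval_word_closed flip: G.eval_word_append H.eval_word_append)
  qed
  moreover have "\<phi> a = x" "\<phi> b = y"
    using \<phi>_eval[of "[(False, False)]"] \<phi>_eval[of "[(True, False)]"] a b assms(3,4)
    by (simp_all add: eval_word_Cons letter_def)
  ultimately show thesis by (rule that)
qed

lemma hom_eq_on_generate:
  assumes "group G" "group H" "f \<in> hom G H" "f' \<in> hom G H"
    and "S \<subseteq> carrier G" "\<And>s. s \<in> S \<Longrightarrow> f s = f' s" and "g \<in> generate G S"
  shows "f g = f' g"
  using assms(7)
proof (induction rule: generate.induct)
  case one
  show ?case using assms(1-4) by (simp add: group_hom.hom_one group_hom_axioms_def group_hom_def)
next
  case (incl h)
  then show ?case by (rule assms(6))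
next
  case (inv h)
  then show ?case using assms by (metis group_hom.hom_inv group_hom_axioms_def group_hom_def subsetD)
next
  case (eng h1 h2)
  then show ?case using assms(1,3,4,5)
    by (metis group.generate_in_carrier hom_mult)
qed

section \<open>Cocycles and the affine group\<close>

definition general_linear_group :: "('a::field^'n^'n) monoid" where
  "general_linear_group = \<lparr>carrier = {M. invertible M}, mult = (**), one = mat 1\<rparr>"

text \<open>\<open>(M, t)\<close> stands for the affine map \<open>x \<mapsto> M x + t\<close>.\<close>
definition affine_group :: "(('a::field^'n^'n) \<times> ('a^'n)) monoid" where
  "affine_group = \<lparr>carrier = {(M, t). invertible M},
     mult = (\<lambda>(M, t) (N, s). (M ** N, t + M *v s)), one = (mat 1, 0)\<rparr>"

lemma invertible_mat_1: "invertible (mat 1 :: 'a::field^'n^'n)"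
  unfolding invertible_def by (metis matrix_mul_lid)

lemma invertible_left_inverse_invertible:
  fixes A :: "'a::field^'n^'n"
  assumes "invertible A" obtains B where "invertible B" "B ** A = mat 1"
  using assms invertible_left_inverse invertible_right_inverse by metis

lemma group_general_linear_group: "group (general_linear_group :: ('a::field^'n^'n) monoid)"
  by (rule groupI) (auto simp: general_linear_group_def invertible_mult invertible_mat_1
      matrix_mul_assoc elim: invertible_left_inverse_invertible)

lemma group_affine_group: "group (affine_group :: (('a::field^'n^'n) \<times> ('a^'n)) monoid)"
proof (rule groupI)
  fix x assume "x \<in> carrier (affine_group :: (('a^'n^'n) \<times> ('a^'n)) monoid)"
  then obtain M t where x: "x = (M, t)" "invertible M" by (auto simp: affine_group_def)
  obtain B where "invertible B" "B ** M = mat 1"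
    using x(2) by (rule invertible_left_inverse_invertible)
  then have "(B, - (B *v t)) \<in> carrier affine_group \<and> (B, - (B *v t)) \<otimes>\<^bsub>affine_group\<^esub> x = \<one>\<^bsub>affine_group\<^esub>"
    using x by (simp add: affine_group_def matrix_vector_mul_assoc)
  then show "\<exists>y\<in>carrier affine_group. y \<otimes>\<^bsub>affine_group\<^esub> x = \<one>\<^bsub>affine_group\<^esub>" by blast
qed (auto simp: affine_group_def invertible_mult invertible_mat_1 matrix_mul_assoc
    matrix_vector_right_distrib matrix_vector_mul_assoc)

lemma SO21grp_hom_general_linear_group:
  "r \<in> hom G SO21grp \<Longrightarrow> r \<in> hom G general_linear_group"
  using SO21_0_subset_O21 O21_invertible
  by (fastforce simp: hom_def SO21grp_def general_linear_group_def)

lemma cocycle_iff_affine_hom: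
  assumes "r \<in> hom G general_linear_group"
  shows "u \<in> cocycles G r \<longleftrightarrow> (\<lambda>g. (r g, u g)) \<in> hom G affine_group"
  using assms by (auto simp: cocycles_def hom_def affine_group_def general_linear_group_def)

lemma cocycle_one:
  assumes "group G" "r \<in> hom G general_linear_group" "u \<in> cocycles G r"
  shows "u \<one>\<^bsub>G\<^esub> = 0"
proof -
  have "group_hom G affine_group (\<lambda>g. (r g, u g))"
    using assms group_affine_group
    by (simp add: cocycle_iff_affine_hom group_hom_def group_hom_axioms_def)
  then have "(r \<one>\<^bsub>G\<^esub>, u \<one>\<^bsub>G\<^esub>) = \<one>\<^bsub>affine_group\<^esub>" by (rule group_hom.hom_one)
  then show ?thesis by (simp add: affine_group_def)
qed

lemma coboundary_cocycle:
  assumes "r \<in> hom G general_linear_group"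
  shows "(\<lambda>g. r g *v x - x) \<in> cocycles G r"
  using assms by (auto simp: cocycles_def hom_def general_linear_group_def
      matrix_vector_mult_diff_distrib matrix_vector_mul_assoc)

context
  fixes G :: "('g, 'b) monoid_scheme" and r :: "'g \<Rightarrow> real^3^3" and S :: "'g set"
  assumes G: "group G" and r: "r \<in> hom G general_linear_group"
    and S: "S \<subseteq> carrier G" "generate G S = carrier G"
begin

lemma cocycle_eq_on_generators:
  assumes "u \<in> cocycles G r" "u' \<in> cocycles G r" "\<And>s. s \<in> S \<Longrightarrow> u s = u' s"
    and "g \<in> carrier G"
  shows "u g = u' g"
  using hom_eq_on_generate[OF G group_affine_group, of "\<lambda>g. (r g, u g)" "\<lambda>g. (r g, u' g)" S g]
    assms S r by (simp add: cocycle_iff_affine_hom)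

lemma fixed_by_generators:
  assumes "\<And>s. s \<in> S \<Longrightarrow> r s *v x = x" and "g \<in> carrier G"
  shows "r g *v x = x"
  using cocycle_eq_on_generators[OF coboundary_cocycle[OF r] _ _ assms(2), of "\<lambda>_. 0"] assms(1)
  by (simp add: cocycles_def)

end

lemma free_on2_cocycle_exists:
  assumes free: "free_on2 G a b" and r: "r \<in> hom G general_linear_group"
  obtains u where "u \<in> cocycles G r" "u a = c1" "u b = c2"
proof -
  have G: "group G" and ab: "a \<in> carrier G" "b \<in> carrier G" "generate G {a, b} = carrier G"
    using free by (auto simp: free_on2_def)
  have "(r a, c1) \<in> carrier affine_group" "(r b, c2) \<in> carrier affine_group"
    using r ab by (auto simp: affine_group_def hom_def general_linear_group_def)
  then obtain \<phi> where \<phi>: "\<phi> \<in> hom G affine_group" "\<phi> a = (r a, c1)" "\<phi> b = (r b, c2)"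
    using free_on2_hom_exists[OF free group_affine_group] by metis
  have "(\<lambda>g. fst (\<phi> g)) \<in> hom G general_linear_group"
    using \<phi>(1) by (auto simp: hom_def affine_group_def general_linear_group_def Pi_iff case_prod_unfold)
  moreover have "fst (\<phi> s) = r s" if "s \<in> {a, b}" for s
    using that \<phi>(2,3) by auto
  ultimately have linear_part: "fst (\<phi> g) = r g" if "g \<in> carrier G" for g
    using hom_eq_on_generate[OF G group_general_linear_group _ r, where S = "{a, b}"] ab that
    by blast
  have "(\<lambda>g. snd (\<phi> g)) \<in> cocycles G r"
    using \<phi>(1) linear_part
    by (auto simp: cocycles_def hom_def affine_group_def case_prod_unfold)
  then show thesis using that \<phi>(2,3) by simp
qed

lemma comm_group_solvable: "comm_group H \<Longrightarrow> solvable H"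
proof -
  assume "comm_group H"
  then interpret comm_group H .
  have "derived H (carrier H) = {\<one>\<^bsub>H\<^esub>}" by (rule derived_eq_singleton) simp
  then show ?thesis using trivial_derived_seq_imp_solvable[OF subgroup_self, of 1]
    by (simp add: solvable_def)
qed

text \<open>\<open>\<rho>(G)\<close> lies in the stabilizer of \<open>w\<close> in \<open>SO(2,1)\<close>, which is abelian.\<close>
lemma solvable_image_if_common_fixed_vector:
  assumes G: "group G" and rho: "rho \<in> hom G SO21grp"
    and "w \<noteq> 0" and fixed: "\<And>g. g \<in> carrier G \<Longrightarrow> rho g *v w = w"
  shows "solvable (SO21grp\<lparr>carrier := rho ` carrier G\<rparr>)"
proof -
  interpret group_hom G general_linear_group rho
    using G group_general_linear_group SO21grp_hom_general_linear_group[OF rho]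
    by (simp add: group_hom_def group_hom_axioms_def)
  have "group (general_linear_group\<lparr>carrier := rho ` carrier G\<rparr>)"
    by (rule subgroup.subgroup_is_group[OF img_is_subgroup group_general_linear_group])
  moreover have "rho g ** rho h = rho h ** rho g" if "g \<in> carrier G" "h \<in> carrier G" for g h
  proof -
    have "rho g \<in> SO21_0" "rho h \<in> SO21_0" using rho that by (auto simp: hom_def SO21grp_def)
    then show ?thesis
      using stabilizer_commute[OF \<open>w \<noteq> 0\<close>] SO21_0_subset_O21 SO21_0_det fixed that by blast
  qed
  ultimately have "comm_group (general_linear_group\<lparr>carrier := rho ` carrier G\<rparr>)"
    by (intro group.group_comm_groupI) (auto simp: general_linear_group_def)
  moreover have "SO21grp\<lparr>carrier := rho ` carrier G\<rparr> = general_linear_group\<lparr>carrier := rho ` carrier G\<rparr>"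
    by (simp add: SO21grp_def general_linear_group_def)
  ultimately show ?thesis by (simp add: comm_group_solvable)
qed

section \<open>The Margulis invariants\<close>

locale pants_representation =
  fixes G :: "('g, 'b) monoid_scheme" and A1 A2 A3 :: 'g
    and rho0 :: "'g \<Rightarrow> real^3^3" and v1 v2 v3 :: "real^3"
  assumes free: "free_on2 G A1 A2"
    and A3: "A3 \<in> carrier G" "A1 \<otimes>\<^bsub>G\<^esub> A2 \<otimes>\<^bsub>G\<^esub> A3 = \<one>\<^bsub>G\<^esub>"
    and hom: "rho0 \<in> hom G SO21grp"
    and types: "\<forall>A\<in>{A1, A2, A3}. hyperbolic (rho0 A) \<or> parabolic (rho0 A)"
    and nonsolv: "\<not> solvable (SO21grp\<lparr>carrier := rho0 ` carrier G\<rparr>)"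
    and pos: "positive_rel (rho0 A1) v1" "positive_rel (rho0 A2) v2" "positive_rel (rho0 A3) v3"
begin

definition margulis_invariant :: "('g \<Rightarrow> real^3) \<Rightarrow> real^3" where
  "margulis_invariant u = vector [lor (u A1) v1, lor (u A2) v2, lor (u A3) v3]"

lemma group: "group G"
  and generators: "A1 \<in> carrier G" "A2 \<in> carrier G" "generate G {A1, A2} = carrier G"
  using free by (auto simp: free_on2_def)

lemma rho0_group_hom: "group_hom G general_linear_group rho0"
  using group group_general_linear_group SO21grp_hom_general_linear_group[OF hom]
  by (simp add: group_hom_def group_hom_axioms_def)

lemma rho0_general_linear: "rho0 \<in> hom G general_linear_group"
  using rho0_group_hom by (simp add: group_hom_def group_hom_axioms_def)

lemma rho0_O21: "g \<in> carrier G \<Longrightarrow> rho0 g \<in> O21"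
  using hom SO21_0_subset_O21 by (auto simp: hom_def SO21grp_def)

lemma rho0_mult: "g \<in> carrier G \<Longrightarrow> h \<in> carrier G \<Longrightarrow> rho0 (g \<otimes>\<^bsub>G\<^esub> h) = rho0 g ** rho0 h"
  using hom by (simp add: hom_def SO21grp_def)

lemma v_nonzero: "v1 \<noteq> 0" "v2 \<noteq> 0" "v3 \<noteq> 0"
  using types pos positive_rel_nonzero by auto

lemma v_fixed: "rho0 A1 *v v1 = v1" "rho0 A2 *v v2 = v2" "rho0 A3 *v v3 = v3"
  using pos by (auto simp: positive_rel_def Fix_def)

lemma rho0_A1A2A3: "rho0 A1 ** rho0 A2 ** rho0 A3 = mat 1"
proof -
  have "rho0 A1 ** rho0 A2 ** rho0 A3 = rho0 (A1 \<otimes>\<^bsub>G\<^esub> A2 \<otimes>\<^bsub>G\<^esub> A3)"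
    using A3(1) generators by (simp add: rho0_mult group.is_monoid[OF group] monoid.m_closed)
  also have "\<dots> = mat 1"
    using A3(2) group_hom.hom_one[OF rho0_group_hom] by (simp add: general_linear_group_def)
  finally show ?thesis .
qed

lemma A1A2_fixes_v3: "(rho0 A1 ** rho0 A2) *v v3 = v3"
  using rho0_A1A2A3 v_fixed(3) by (metis matrix_vector_mul_assoc matrix_vector_mul_lid)

lemma no_common_fixed_vector:
  assumes "rho0 A1 *v w = w" "rho0 A2 *v w = w" shows "w = 0"
proof (rule ccontr)
  assume "w \<noteq> 0"
  moreover have "rho0 g *v w = w" if "g \<in> carrier G" for g
    using fixed_by_generators[OF group rho0_general_linear _ generators(3)] generators assms that
    by auto
  ultimately show False
    using solvable_image_if_common_fixed_vector[OF group hom] nonsolv by blast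
qed

text \<open>The relation \<open>A\<^sub>1A\<^sub>2A\<^sub>3 = 1\<close> gives
  \<open>u(A\<^sub>3) = -(\<rho>\<^sub>0(A\<^sub>1A\<^sub>2))\<^sup>-\<^sup>1 (u(A\<^sub>1) + \<rho>\<^sub>0(A\<^sub>1) u(A\<^sub>2))\<close>, and \<open>\<rho>\<^sub>0(A\<^sub>1A\<^sub>2)\<close> is an isometry
  fixing \<open>v\<^sub>3\<close>.\<close>
lemma cocycle_third_invariant:
  assumes "u \<in> cocycles G rho0"
  shows "lor (u A3) v3 = - lor (u A1 + rho0 A1 *v u A2) v3"
proof -
  let ?M = "rho0 A1 ** rho0 A2"
  have "0 = u (A1 \<otimes>\<^bsub>G\<^esub> A2 \<otimes>\<^bsub>G\<^esub> A3)"
    using A3(2) cocycle_one[OF group rho0_general_linear assms] by simp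
  also have "\<dots> = u A1 + rho0 A1 *v u A2 + ?M *v u A3"
    using assms A3(1) generators
    by (simp add: cocycles_def rho0_mult group.is_monoid[OF group] monoid.m_closed)
  finally have "?M *v u A3 = - (u A1 + rho0 A1 *v u A2)"
    by (simp add: eq_neg_iff_add_eq_0 add.commute del: minus_add_distrib)
  moreover have "?M \<in> O21"
    using generators rho0_O21 rho0_mult by (metis group.is_monoid[OF group] monoid.m_closed)
  ultimately show ?thesis
    using O21_lor[of ?M "u A3" v3] A1A2_fixes_v3
    by (simp add: lor_minus_left lor_diff_left lor_add_left)
qed

lemma margulis_invariant_coboundary:
  assumes "(\<lambda>g. u g - u' g) \<in> coboundaries G rho0"
  shows "margulis_invariant u = margulis_invariant u'"
proof -
  obtain x where x: "\<And>g. g \<in> carrier G \<Longrightarrow> u g - u' g = rho0 g *v x - x"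
    using assms by (auto simp: coboundaries_def)
  have "lor (u A) v = lor (u' A) v" if "A \<in> carrier G" "rho0 A *v v = v" for A v
  proof -
    have "lor (u A - u' A) v = 0"
      unfolding x[OF that(1)] using rho0_O21[OF that(1)] that(2)
      by (rule O21_fixed_orthogonal_displacement)
    then show ?thesis by (simp add: lor_diff_left)
  qed
  then show ?thesis using generators A3(1) v_fixed by (simp add: margulis_invariant_def)
qed

lemma margulis_invariant_linear:
  "margulis_invariant (\<lambda>g. u g + u' g) = margulis_invariant u + margulis_invariant u'"
  "margulis_invariant (\<lambda>g. c *\<^sub>R u g) = c *\<^sub>R margulis_invariant u"
  by (simp_all add: margulis_invariant_def vec_eq_iff forall_3 lor_add_left lor_scaleR_left)

lemmas margulis_map_hypotheses =
  rho0_O21[OF generators(1)] rho0_O21[OF generators(2)] v_nonzero v_fixed(1,2) A1A2_fixes_v3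
  no_common_fixed_vector

lemma margulis_invariant_surj: "margulis_invariant ` cocycles G rho0 = UNIV"
proof -
  have "r \<in> margulis_invariant ` cocycles G rho0" for r
  proof -
    obtain p where p: "margulis_map (rho0 A1) v1 v2 v3 p = vector [r$1, r$2, - r$3]"
      using surj_margulis_map[OF margulis_map_hypotheses] by (metis surjD)
    obtain u where u: "u \<in> cocycles G rho0" "u A1 = fst p" "u A2 = snd p"
      using free_on2_cocycle_exists[OF free rho0_general_linear] by metis
    have "margulis_invariant u = r"
      using p cocycle_third_invariant[OF u(1)]
      by (simp add: u(2,3) margulis_invariant_def margulis_map_def vec_eq_iff forall_3)
    then show ?thesis using u(1) by blast
  qed
  then show ?thesis by blast
qed

lemma margulis_invariant_kernel:
  assumes u: "u \<in> cocycles G rho0" and "margulis_invariant u = 0"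
  shows "u \<in> coboundaries G rho0"
proof -
  have "margulis_map (rho0 A1) v1 v2 v3 (u A1, u A2) = 0"
    using assms cocycle_third_invariant[OF u]
    by (simp add: margulis_invariant_def margulis_map_def vec_eq_iff forall_3)
  then obtain x where "u A1 = rho0 A1 *v x - x" "u A2 = rho0 A2 *v x - x"
    using margulis_map_kernel[OF margulis_map_hypotheses] by blast
  then have "u g = rho0 g *v x - x" if "g \<in> carrier G" for g
    using cocycle_eq_on_generators[OF group rho0_general_linear _ generators(3)
        u coboundary_cocycle[OF rho0_general_linear] _ that] generators by auto
  then show ?thesis by (auto simp: coboundaries_def)
qed

end

theorem lemma6p1:
  fixes G :: "('g, 'b) monoid_scheme" and A1 A2 A3 :: 'g
    and rho0 :: "'g \<Rightarrow> real^3^3" and v1 v2 v3 :: "real^3"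
    and mu :: "('g \<Rightarrow> real^3) \<Rightarrow> real^3"
  assumes free: "free_on2 G A1 A2"
    and A3: "A3 \<in> carrier G" "A1 \<otimes>\<^bsub>G\<^esub> A2 \<otimes>\<^bsub>G\<^esub> A3 = \<one>\<^bsub>G\<^esub>"
    and hom: "rho0 \<in> hom G SO21grp"
    and types: "\<forall>A\<in>{A1, A2, A3}. hyperbolic (rho0 A) \<or> parabolic (rho0 A)"
    and nonsolv: "\<not> solvable (SO21grp\<lparr>carrier := rho0 ` carrier G\<rparr>)"
    and pos: "positive_rel (rho0 A1) v1" "positive_rel (rho0 A2) v2" "positive_rel (rho0 A3) v3"
    and mu_def: "\<And>u. mu u = vector [lor (u A1) v1, lor (u A2) v2, lor (u A3) v3]"
  shows "(\<forall>u\<in>cocycles G rho0. \<forall>u'\<in>cocycles G rho0.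
            (\<lambda>g. u g - u' g) \<in> coboundaries G rho0 \<longrightarrow> mu u = mu u')
       \<and> (\<forall>u\<in>cocycles G rho0. \<forall>u'\<in>cocycles G rho0. \<forall>c::real.
            mu (\<lambda>g. u g + u' g) = mu u + mu u' \<and> mu (\<lambda>g. c *\<^sub>R u g) = c *\<^sub>R mu u)
       \<and> mu ` cocycles G rho0 = UNIV
       \<and> (\<forall>u\<in>cocycles G rho0. mu u = 0 \<longrightarrow> u \<in> coboundaries G rho0)"
proof -
  interpret pants_representation G A1 A2 A3 rho0 v1 v2 v3
    using free A3 hom types nonsolv pos by unfold_locales
  have "mu = margulis_invariant" using mu_def by (simp add: fun_eq_iff margulis_invariant_def)
  then show ?thesis
    using margulis_invariant_coboundary margulis_invariant_linear margulis_invariant_surj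
      margulis_invariant_kernel by simp
qed

end
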